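(* Let $\ell>0$, $r>0$, $\lambda>0$, and let $G$ be a probability distribution on $[0,\infty)$ with finite mean $s_1=\int s\,G(ds)$. Let $W=(W_t)_{t\in\mathbb{Z}_+}$ be the greedy polling population process on the circle of circumference $\ell$ with arrival rate $\lambda$, scan radius $r$ and interpolling distribution $G$ (described in the context). If $\lambda s_1\ge 1$, then $W$ is not positive recurrent, and if $\lambda s_1>1$, then $\|W_t\|\to\infty$ almost surely as $t\to\infty$, for every initial state.
   Context: $S$ is the circle of circumference $\ell$, with $d(x,y)$ the length of the shortest arc joining $x$ and $y$, and $m$ the uniform probability distribution on $S$. For $x\in S$ and $\rho>0$, $B_\rho(x)=\{y\in S: d(x,y)<\rho\}$. $M_+(S)$ is the set of finite counting measures (configurations) on $S$; $\|\zeta\|=\zeta(S)$; $x\in\zeta$ means $\zeta(\{x\})>0$. For $\zeta\in M_+(S)$ and $x\in\zeta$, $\Gamma_\zeta(x)=\{y\in S: d(x,y)<d(x',y)\text{ for all } x'\in\zeta,\ x'\neq x\}$. The process $W$ is the Markov chain on $M_+(S)$ with the following transition from $W_t=\zeta$: first $N$ new customers are added at i.i.d. $m$-distributed locations, where $P(N=n)=\int e^{-\lambda s}\frac{(\lambda s)^n}{n!}\,G(ds)$; call the result $\zeta'$. Then a point $U$ uniform on $S$ is chosen independently; if $\zeta'(B_r(U))=0$ nothing changes, otherwise one customer at the atom of $\zeta'$ nearest to $U$ is removed (equivalently, for each $x\in\zeta'$ one customer at $x$ is removed with probability $m(B_r(x)\cap\Gamma_{\zeta'}(x))$). The result is $W_{t+1}$.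 *)

theory Defs
  imports "HOL-Probability.Probability" "HOL-Library.Multiset"
begin

text \<open>The circle S of circumference l is represented by the interval [0,l);
  configurations (finite counting measures on S) are multisets of reals.\<close>

definition circ_dist :: "real \<Rightarrow> real \<Rightarrow> real \<Rightarrow> real" where
  "circ_dist l x y = min \<bar>x - y\<bar> (l - \<bar>x - y\<bar>)"

definition unif_circ :: "real \<Rightarrow> real measure" where
  "unif_circ l = uniform_measure lborel {0..<l}"

definition arrivals_dist :: "real \<Rightarrow> real measure \<Rightarrow> nat measure" where
  "arrivals_dist lam G = density (count_space UNIV)
     (\<lambda>n. \<integral>\<^sup>+ s. ennreal (exp (- lam * s) * (lam * s) ^ n / fact n) \<partial>G)"

text \<open>atom of the configuration nearest to u (ties, a null event, broken by the smallest point)\<close>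
definition nearest_atom :: "real \<Rightarrow> real multiset \<Rightarrow> real \<Rightarrow> real" where
  "nearest_atom l \<zeta> u =
     Min {x \<in> set_mset \<zeta>. circ_dist l x u = Min ((\<lambda>y. circ_dist l y u) ` set_mset \<zeta>)}"

definition serve :: "real \<Rightarrow> real \<Rightarrow> real multiset \<Rightarrow> real \<Rightarrow> real multiset" where
  "serve l r \<zeta> u =
     (if \<exists>x \<in># \<zeta>. circ_dist l x u < r then \<zeta> - {# nearest_atom l \<zeta> u #} else \<zeta>)"

text \<open>one step driven by input (N, positions X_0, X_1, ..., U): add customers at X_0..X_{N-1}, then serve\<close>
definition polling_step :: "real \<Rightarrow> real \<Rightarrow> real multiset \<Rightarrow> nat \<times> (nat \<Rightarrow> real) \<times> real \<Rightarrow> real multiset" where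
  "polling_step l r \<zeta> inp =
     (case inp of (n, xs, u) \<Rightarrow> serve l r (\<zeta> + mset (map xs [0..<n])) u)"

definition input_dist :: "real \<Rightarrow> real \<Rightarrow> real measure \<Rightarrow> (nat \<times> (nat \<Rightarrow> real) \<times> real) measure" where
  "input_dist l lam G = arrivals_dist lam G \<Otimes>\<^sub>M ((\<Pi>\<^sub>M i\<in>UNIV. unif_circ l) \<Otimes>\<^sub>M unif_circ l)"

definition polling_space :: "real \<Rightarrow> real \<Rightarrow> real measure \<Rightarrow> (nat \<times> (nat \<Rightarrow> real) \<times> real) stream measure" where
  "polling_space l lam G = stream_space (input_dist l lam G)"

fun polling_W :: "real \<Rightarrow> real \<Rightarrow> real multiset \<Rightarrow> (nat \<times> (nat \<Rightarrow> real) \<times> real) stream \<Rightarrow> nat \<Rightarrow> real multiset" where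
  "polling_W l r \<zeta> \<omega> 0 = \<zeta>"
| "polling_W l r \<zeta> \<omega> (Suc t) = polling_step l r (polling_W l r \<zeta> \<omega> t) (\<omega> !! t)"

text \<open>positive recurrence: the empty configuration (an accessible atom) has finite mean return time\<close>
definition return_time_empty :: "real \<Rightarrow> real \<Rightarrow> (nat \<times> (nat \<Rightarrow> real) \<times> real) stream \<Rightarrow> ennreal" where
  "return_time_empty l r \<omega> =
     (if \<exists>t\<ge>1. polling_W l r {#} \<omega> t = {#}
      then of_nat (LEAST t. t \<ge> 1 \<and> polling_W l r {#} \<omega> t = {#}) else \<infinity>)"

definition polling_positive_recurrent :: "real \<Rightarrow> real \<Rightarrow> real \<Rightarrow> real measure \<Rightarrow> bool" where
  "polling_positive_recurrent l r lam G \<longleftrightarrow>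
     (\<integral>\<^sup>+ \<omega>. return_time_empty l r \<omega> \<partial>polling_space l lam G) < \<infinity>"

end

theory Submission
  imports Defs
begin

text \<open>At most one customer is served per step, so \<open>\<parallel>W\<^sub>t\<parallel> \<ge> \<parallel>W\<^sub>0\<parallel> + N\<^sub>0 + \<dots> + N\<^bsub>t-1\<^esub> - t\<close>,
  where the arrival counts \<open>N\<^sub>k\<close> are i.i.d. mixed Poisson with mean \<open>\<lambda> s\<^sub>1\<close>. If \<open>\<lambda> s\<^sub>1 \<ge> 1\<close>, the
  walk \<open>N\<^sub>0 + \<dots> + N\<^bsub>t-1\<^esub> - t\<close> started at 0 has a busy period of infinite mean by Wald's identity
  (using \<open>P (N = 0) > 0\<close>), and the return time of \<open>W\<close> to the empty state is at least that long.
  If \<open>\<lambda> s\<^sub>1 > 1\<close>, a Chernoff bound and Borel--Cantelli show that the walk eventually exceeds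
  \<open>(c - 1) t\<close> for some \<open>c > 1\<close>.\<close>

section \<open>Busy periods of a random walk\<close>

text \<open>Started at \<open>a = 0\<close> it bounds the queue length of the polling process from below,
  so its first zero, the \<open>busy_period\<close> (infinite if there is none), precedes the return to the empty
  configuration.\<close>

definition positive_upto :: "('a \<Rightarrow> nat) \<Rightarrow> nat \<Rightarrow> nat \<Rightarrow> 'a stream \<Rightarrow> bool" where
  "positive_upto N a i \<omega> \<longleftrightarrow> (\<forall>j\<in>{1..i}. j < a + (\<Sum>k<j. N (\<omega> !! k)))"

lemma positive_upto_0 [simp]: "positive_upto N a 0 \<omega>"
  by (simp add: positive_upto_def)

lemma positive_upto_Stream:
  "positive_upto N a (Suc i) (x ## \<omega>) \<longleftrightarrow> 1 < a + N x \<and> positive_upto N (a + N x - 1) i \<omega>"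
proof -
  have shift: "(\<forall>j\<in>{1..Suc i}. P j) \<longleftrightarrow> P 1 \<and> (\<forall>j\<in>{1..i}. P (Suc j))" for P
    by (auto simp: Ball_def) (metis Suc_le_D Suc_le_mono le_SucE)
  show ?thesis
    unfolding positive_upto_def shift
    by (auto simp del: sum.lessThan_Suc simp add: sum.lessThan_Suc_shift)
qed

lemma positive_upto_mono: "positive_upto N a i \<omega> \<Longrightarrow> k \<le> i \<Longrightarrow> positive_upto N a k \<omega>"
  unfolding positive_upto_def by auto

lemma measurable_positive_upto [measurable]:
  assumes [measurable]: "N \<in> M \<rightarrow>\<^sub>M count_space UNIV"
  shows "Measurable.pred (stream_space M) (positive_upto N a i)"
proof (induction i arbitrary: a)
  case (Suc i)
  have [measurable]: "Measurable.pred (stream_space M) (positive_upto N b i)" for b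
    by (rule Suc)
  have unfold: "positive_upto N a (Suc i) =
      (\<lambda>\<omega>. \<exists>n. N (shd \<omega>) = n \<and> 1 < a + n \<and> positive_upto N (a + n - 1) i (stl \<omega>))"
  proof
    fix \<omega> :: "'a stream"
    show "positive_upto N a (Suc i) \<omega> = (\<exists>n. N (shd \<omega>) = n \<and> 1 < a + n \<and> positive_upto N (a + n - 1) i (stl \<omega>))"
      using positive_upto_Stream[of N a i "shd \<omega>" "stl \<omega>"] by simp
  qed
  show ?case unfolding unfold by measurable
next
  case 0
  have "positive_upto N a 0 = (\<lambda>_. True)" by (simp add: fun_eq_iff)
  then show ?case by simp
qed

definition busy_period :: "('a \<Rightarrow> nat) \<Rightarrow> 'a stream \<Rightarrow> ennreal" where
  "busy_period N \<omega> = (\<Sum>i. if positive_upto N 0 i \<omega> then 1 else 0)"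

lemma busy_period_eq_first_exit:
  assumes "\<not> positive_upto N 0 s \<omega>" "\<And>i. i < s \<Longrightarrow> positive_upto N 0 i \<omega>"
  shows "busy_period N \<omega> = of_nat s"
proof -
  have "\<not> positive_upto N 0 i \<omega>" if "s \<le> i" for i
    using assms(1) positive_upto_mono that by blast
  then have "busy_period N \<omega> = (\<Sum>i<s. if positive_upto N 0 i \<omega> then 1 else 0)"
    unfolding busy_period_def by (intro suminf_finite) auto
  then show ?thesis using assms(2) by simp
qed

lemma suminf_const_one_ennreal: "(\<Sum>i. (1::ennreal)) = \<infinity>"
proof (rule ccontr)
  assume "(\<Sum>i. (1::ennreal)) \<noteq> \<infinity>"
  then have "summable (\<lambda>_. 1::real)"
    using summable_suminf_not_top[of "\<lambda>_. 1::real"] by simp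
  then show False by (simp add: summable_const_iff)
qed

lemma arrivals_before_first_exit_le:
  assumes exit: "\<not> positive_upto N 0 s \<omega>" and before: "\<And>i. i < s \<Longrightarrow> positive_upto N 0 i \<omega>"
  shows "(\<Sum>k<s. N (\<omega> !! k)) + (if N (shd \<omega>) = 0 then 1 else 0) \<le> s"
proof -
  define A where "A j = (\<Sum>k<j. N (\<omega> !! k))" for j
  have "1 \<le> s" using exit by (cases s) auto
  have "A s \<le> s"
  proof -
    obtain j where j: "j \<in> {1..s}" "\<not> j < A j"
      using exit unfolding positive_upto_def A_def by auto
    have "j = s"
    proof (rule ccontr)
      assume "j \<noteq> s"
      then have "positive_upto N 0 j \<omega>" using before j(1) by simp
      then show False using j unfolding positive_upto_def A_def by auto
    qed
    then show ?thesis using j by simp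
  qed
  moreover have "A s < s" if "N (shd \<omega>) = 0"
  proof (cases "s = 1")
    case False
    then have "positive_upto N 0 1 \<omega>" using before \<open>1 \<le> s\<close> by simp
    then show ?thesis using that unfolding positive_upto_def by simp
  qed (use that in \<open>simp add: A_def\<close>)
  ultimately show ?thesis unfolding A_def by auto
qed

lemma arrivals_in_busy_period_le:
  "(\<Sum>i. if positive_upto N 0 i \<omega> then of_nat (N (\<omega> !! i)) else 0) + (if N (shd \<omega>) = 0 then 1 else 0)
     \<le> busy_period N \<omega>"
proof (cases "\<forall>i. positive_upto N 0 i \<omega>")
  case True
  then show ?thesis by (simp add: busy_period_def suminf_const_one_ennreal)
next
  case False
  define s where "s = (LEAST i. \<not> positive_upto N 0 i \<omega>)"
  obtain i where "\<not> positive_upto N 0 i \<omega>" using False by blast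
  then have exit: "\<not> positive_upto N 0 s \<omega>"
    unfolding s_def by (rule LeastI)
  have before: "positive_upto N 0 i \<omega>" if "i < s" for i
    using not_less_Least[of i "\<lambda>i. \<not> positive_upto N 0 i \<omega>"] that unfolding s_def by blast
  have "\<not> positive_upto N 0 i \<omega>" if "s \<le> i" for i
    using exit positive_upto_mono that by blast
  then have "(\<Sum>i. if positive_upto N 0 i \<omega> then of_nat (N (\<omega> !! i)) else 0)
      = (\<Sum>i<s. if positive_upto N 0 i \<omega> then of_nat (N (\<omega> !! i)) else 0 :: ennreal)"
    by (intro suminf_finite) auto
  also have "\<dots> = of_nat (\<Sum>k<s. N (\<omega> !! k))"
    using before unfolding of_nat_sum by (intro sum.cong) auto
  finally have "(\<Sum>i. if positive_upto N 0 i \<omega> then of_nat (N (\<omega> !! i)) else 0) + (if N (shd \<omega>) = 0 then 1 else 0)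
      = (of_nat ((\<Sum>k<s. N (\<omega> !! k)) + (if N (shd \<omega>) = 0 then 1 else 0)) :: ennreal)"
    by simp
  also have "\<dots> \<le> of_nat s"
    using arrivals_before_first_exit_le[OF exit before] by (simp only: of_nat_le_iff)
  also have "\<dots> = busy_period N \<omega>"
    using exit before by (rule busy_period_eq_first_exit[symmetric])
  finally show ?thesis .
qed

lemma nn_integral_stream_space_shd:
  assumes "prob_space M" and [measurable]: "f \<in> borel_measurable M"
  shows "(\<integral>\<^sup>+\<omega>. f (shd \<omega>) \<partial>stream_space M) = (\<integral>\<^sup>+x. f x \<partial>M)"
proof -
  interpret S: prob_space "stream_space M" by (rule prob_space.prob_space_stream_space) fact
  have "(\<integral>\<^sup>+\<omega>. f (shd \<omega>) \<partial>stream_space M) = (\<integral>\<^sup>+x. (\<integral>\<^sup>+X. f (shd (x ## X)) \<partial>stream_space M) \<partial>M)"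
    using assms(1) by (rule prob_space.nn_integral_stream_space) measurable
  then show ?thesis using S.emeasure_space_1 by simp
qed

text \<open>The event that the walk stays positive up to time \<open>i\<close> depends only on the first \<open>i\<close> inputs,
  hence is independent of the \<open>i\<close>-th arrival count.\<close>

lemma nn_integral_arrivals_while_positive:
  assumes "prob_space M" and [measurable]: "N \<in> M \<rightarrow>\<^sub>M count_space UNIV"
  shows "(\<integral>\<^sup>+\<omega>. (if positive_upto N a i \<omega> then of_nat (N (\<omega> !! i)) else 0) \<partial>stream_space M)
       = (\<integral>\<^sup>+x. of_nat (N x) \<partial>M) * (\<integral>\<^sup>+\<omega>. (if positive_upto N a i \<omega> then 1 else 0) \<partial>stream_space M)"
proof -
  interpret prob_space M by fact
  interpret S: prob_space "stream_space M" by (rule prob_space_stream_space)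
  let ?EN = "\<integral>\<^sup>+x. of_nat (N x) \<partial>M"
  show ?thesis
  proof (induction i arbitrary: a)
    case 0
    show ?case
      using nn_integral_stream_space_shd[OF assms(1), of "\<lambda>x. of_nat (N x)"] S.emeasure_space_1 by simp
  next
    case (Suc i)
    have peel: "(\<integral>\<^sup>+X. (if positive_upto N a (Suc i) (x ## X) then of_nat (N ((x ## X) !! Suc i)) else 0) \<partial>stream_space M)
        = (\<integral>\<^sup>+X. ?EN * (if positive_upto N a (Suc i) (x ## X) then 1 else 0) \<partial>stream_space M)"
      if "x \<in> space M" for x
    proof -
      have [measurable]: "(\<lambda>X. x ## X) \<in> stream_space M \<rightarrow>\<^sub>M stream_space M"
        using that by measurable
      have "(\<integral>\<^sup>+X. (if positive_upto N a (Suc i) (x ## X) then of_nat (N ((x ## X) !! Suc i)) else 0) \<partial>stream_space M)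
          = (if 1 < a + N x then (\<integral>\<^sup>+X. (if positive_upto N (a + N x - 1) i X then of_nat (N (X !! i)) else 0) \<partial>stream_space M) else 0)"
        by (simp add: positive_upto_Stream, intro impI nn_integral_cong, simp only: snth_Stream)
      also have "\<dots> = ?EN * (\<integral>\<^sup>+X. (if positive_upto N a (Suc i) (x ## X) then 1 else 0) \<partial>stream_space M)"
        using Suc.IH by (simp add: positive_upto_Stream)
      also have "\<dots> = (\<integral>\<^sup>+X. ?EN * (if positive_upto N a (Suc i) (x ## X) then 1 else 0) \<partial>stream_space M)"
        by (rule nn_integral_cmult[symmetric]) measurable
      finally show ?thesis .
    qed
    have "(\<integral>\<^sup>+\<omega>. (if positive_upto N a (Suc i) \<omega> then of_nat (N (\<omega> !! Suc i)) else 0) \<partial>stream_space M)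
        = (\<integral>\<^sup>+x. (\<integral>\<^sup>+X. (if positive_upto N a (Suc i) (x ## X) then of_nat (N ((x ## X) !! Suc i)) else 0) \<partial>stream_space M) \<partial>M)"
      by (rule nn_integral_stream_space) measurable
    also have "\<dots> = (\<integral>\<^sup>+x. (\<integral>\<^sup>+X. ?EN * (if positive_upto N a (Suc i) (x ## X) then 1 else 0) \<partial>stream_space M) \<partial>M)"
      by (rule nn_integral_cong) (rule peel)
    also have "\<dots> = (\<integral>\<^sup>+\<omega>. ?EN * (if positive_upto N a (Suc i) \<omega> then 1 else 0) \<partial>stream_space M)"
      by (rule nn_integral_stream_space[symmetric]) measurable
    also have "\<dots> = ?EN * (\<integral>\<^sup>+\<omega>. (if positive_upto N a (Suc i) \<omega> then 1 else 0) \<partial>stream_space M)"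
      by (rule nn_integral_cmult) measurable
    finally show ?case .
  qed
qed

lemma nn_integral_arrivals_in_busy_period:
  assumes "prob_space M" and [measurable]: "N \<in> M \<rightarrow>\<^sub>M count_space UNIV"
  shows "(\<integral>\<^sup>+\<omega>. (\<Sum>i. if positive_upto N 0 i \<omega> then of_nat (N (\<omega> !! i)) else 0) \<partial>stream_space M)
       = (\<integral>\<^sup>+x. of_nat (N x) \<partial>M) * (\<integral>\<^sup>+\<omega>. busy_period N \<omega> \<partial>stream_space M)"
proof -
  have "(\<integral>\<^sup>+\<omega>. (\<Sum>i. if positive_upto N 0 i \<omega> then of_nat (N (\<omega> !! i)) else 0) \<partial>stream_space M)
      = (\<Sum>i. \<integral>\<^sup>+\<omega>. (if positive_upto N 0 i \<omega> then of_nat (N (\<omega> !! i)) else 0) \<partial>stream_space M)"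
    by (rule nn_integral_suminf) measurable
  also have "\<dots> = (\<integral>\<^sup>+x. of_nat (N x) \<partial>M)
      * (\<Sum>i. \<integral>\<^sup>+\<omega>. (if positive_upto N 0 i \<omega> then 1 else 0) \<partial>stream_space M)"
    by (simp add: nn_integral_arrivals_while_positive[OF assms])
  also have "(\<Sum>i. \<integral>\<^sup>+\<omega>. (if positive_upto N 0 i \<omega> then 1 else 0) \<partial>stream_space M)
      = (\<integral>\<^sup>+\<omega>. busy_period N \<omega> \<partial>stream_space M)"
    unfolding busy_period_def by (rule nn_integral_suminf[symmetric]) measurable
  finally show ?thesis .
qed

text \<open>Wald's identity gives \<open>E N \<cdot> E \<sigma> + P (N = 0) \<le> E \<sigma>\<close> for the busy period \<open>\<sigma>\<close>, which is impossible
  for finite \<open>E \<sigma>\<close> once \<open>E N \<ge> 1\<close>.\<close>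

lemma nn_integral_busy_period_eq_top:
  assumes "prob_space M" and [measurable]: "N \<in> M \<rightarrow>\<^sub>M count_space UNIV"
    and mean: "1 \<le> (\<integral>\<^sup>+x. of_nat (N x) \<partial>M)"
    and idle: "0 < emeasure M {x\<in>space M. N x = 0}"
  shows "(\<integral>\<^sup>+\<omega>. busy_period N \<omega> \<partial>stream_space M) = \<infinity>"
proof (rule ccontr)
  define E where "E = (\<integral>\<^sup>+\<omega>. busy_period N \<omega> \<partial>stream_space M)"
  define p where "p = emeasure M {x\<in>space M. N x = 0}"
  assume "(\<integral>\<^sup>+\<omega>. busy_period N \<omega> \<partial>stream_space M) \<noteq> \<infinity>"
  then have "E \<noteq> \<infinity>" unfolding E_def .
  have "(\<integral>\<^sup>+\<omega>. (if N (shd \<omega>) = 0 then 1 else 0) \<partial>stream_space M) = (\<integral>\<^sup>+x. (if N x = 0 then 1 else 0) \<partial>M)"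
    by (rule nn_integral_stream_space_shd[OF assms(1)]) measurable
  also have "\<dots> = (\<integral>\<^sup>+x. indicator {x\<in>space M. N x = 0} x \<partial>M)"
    by (intro nn_integral_cong) (simp add: indicator_def)
  finally have idle_first: "(\<integral>\<^sup>+\<omega>. (if N (shd \<omega>) = 0 then 1 else 0) \<partial>stream_space M) = p"
    unfolding p_def by simp
  have "E + p \<le> (\<integral>\<^sup>+x. of_nat (N x) \<partial>M) * E + p"
    using mult_right_mono[OF mean, of E] by (simp add: add_right_mono)
  also have "\<dots> = (\<integral>\<^sup>+\<omega>. (\<Sum>i. if positive_upto N 0 i \<omega> then of_nat (N (\<omega> !! i)) else 0)
                       + (if N (shd \<omega>) = 0 then 1 else 0) \<partial>stream_space M)"
    unfolding E_def
    by (subst nn_integral_add) (simp_all add: nn_integral_arrivals_in_busy_period[OF assms(1,2)] idle_first)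
  also have "\<dots> \<le> E"
    unfolding E_def by (intro nn_integral_mono arrivals_in_busy_period_le)
  finally have "E + p \<le> E + 0" by simp
  then have "p = 0"
    using \<open>E \<noteq> \<infinity>\<close> by (simp add: ennreal_add_left_cancel_le)
  then show False using idle unfolding p_def by simp
qed


section \<open>A lower large-deviation bound\<close>

lemma exp_neg_le_quadratic:
  fixes t :: real
  assumes "0 \<le> t"
  shows "exp (- t) \<le> 1 - t + t\<^sup>2 / 2"
proof -
  let ?f = "\<lambda>x::real. 1 - x + x\<^sup>2 / 2 - exp (- x)"
  have "?f 0 \<le> ?f t"
  proof (rule DERIV_nonneg_imp_increasing_open[OF assms])
    fix x :: real
    have "DERIV ?f x :> (x - 1 + exp (- x))"
      by (auto intro!: derivative_eq_intros simp: power2_eq_square)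
    moreover have "x - 1 + exp (- x) \<ge> 0"
      using exp_ge_add_one_self[of "- x"] by simp
    ultimately show "\<exists>y. DERIV ?f x :> y \<and> y \<ge> 0" by blast
  qed (intro continuous_intros, simp)
  then show ?thesis by simp
qed

lemma nn_integral_exp_neg_partial_sum:
  assumes "prob_space M" and [measurable]: "Y \<in> borel_measurable M"
  shows "(\<integral>\<^sup>+\<omega>. ennreal (exp (- (\<Sum>k<n. Y (\<omega> !! k)))) \<partial>stream_space M)
       = (\<integral>\<^sup>+x. ennreal (exp (- Y x)) \<partial>M) ^ n"
proof -
  interpret prob_space M by fact
  interpret S: prob_space "stream_space M" by (rule prob_space_stream_space)
  let ?\<phi> = "\<integral>\<^sup>+x. ennreal (exp (- Y x)) \<partial>M"
  show ?thesis
  proof (induction n)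
    case 0
    then show ?case using S.emeasure_space_1 by simp
  next
    case (Suc n)
    have peel: "(\<integral>\<^sup>+X. ennreal (exp (- (\<Sum>k<Suc n. Y ((x ## X) !! k)))) \<partial>stream_space M)
        = ennreal (exp (- Y x)) * ?\<phi> ^ n" for x
    proof -
      have "(\<integral>\<^sup>+X. ennreal (exp (- (\<Sum>k<Suc n. Y ((x ## X) !! k)))) \<partial>stream_space M)
          = (\<integral>\<^sup>+X. ennreal (exp (- Y x)) * ennreal (exp (- (\<Sum>k<n. Y (X !! k)))) \<partial>stream_space M)"
        by (intro nn_integral_cong)
          (simp del: sum.lessThan_Suc add: sum.lessThan_Suc_shift snth_Stream exp_add[symmetric]
             ennreal_mult[symmetric])
      also have "\<dots> = ennreal (exp (- Y x)) * ?\<phi> ^ n"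
        using Suc.IH by (subst nn_integral_cmult) simp_all
      finally show ?thesis .
    qed
    have "(\<integral>\<^sup>+\<omega>. ennreal (exp (- (\<Sum>k<Suc n. Y (\<omega> !! k)))) \<partial>stream_space M)
        = (\<integral>\<^sup>+x. (\<integral>\<^sup>+X. ennreal (exp (- (\<Sum>k<Suc n. Y ((x ## X) !! k)))) \<partial>stream_space M) \<partial>M)"
      by (rule nn_integral_stream_space) measurable
    also have "\<dots> = (\<integral>\<^sup>+x. ennreal (exp (- Y x)) * ?\<phi> ^ n \<partial>M)"
      unfolding peel ..
    also have "\<dots> = ?\<phi> * ?\<phi> ^ n"
      by (rule nn_integral_multc) measurable
    finally show ?case by simp
  qed
qed

lemma emeasure_partial_sum_le_chernoff:
  assumes "prob_space M" and [measurable]: "Y \<in> borel_measurable M" and "0 \<le> \<theta>"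
  shows "emeasure (stream_space M) {\<omega>\<in>space (stream_space M). (\<Sum>k<n. Y (\<omega> !! k)) \<le> c * n}
       \<le> (ennreal (exp (\<theta> * c)) * (\<integral>\<^sup>+x. ennreal (exp (- (\<theta> * Y x))) \<partial>M)) ^ n"
proof -
  let ?S = "stream_space M"
  let ?A = "{\<omega>\<in>space ?S. (\<Sum>k<n. Y (\<omega> !! k)) \<le> c * n}"
  have "indicator ?A \<omega> \<le> ennreal (exp (\<theta> * c * n)) * ennreal (exp (- (\<Sum>k<n. \<theta> * Y (\<omega> !! k))))"
    for \<omega>
  proof (cases "\<omega> \<in> ?A")
    case True
    then have "\<theta> * (\<Sum>k<n. Y (\<omega> !! k)) \<le> \<theta> * (c * n)"
      using \<open>0 \<le> \<theta>\<close> by (intro mult_left_mono) auto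
    then have "1 \<le> exp (\<theta> * c * n) * exp (- (\<Sum>k<n. \<theta> * Y (\<omega> !! k)))"
      by (simp add: exp_add[symmetric] sum_distrib_left[symmetric] mult.assoc)
    then show ?thesis using True by (simp add: ennreal_mult[symmetric])
  qed simp
  then have "emeasure ?S ?A
      \<le> (\<integral>\<^sup>+\<omega>. ennreal (exp (\<theta> * c * n)) * ennreal (exp (- (\<Sum>k<n. \<theta> * Y (\<omega> !! k)))) \<partial>?S)"
    by (subst nn_integral_indicator[symmetric]) (measurable, intro nn_integral_mono)
  also have "\<dots> = ennreal (exp (\<theta> * c * n)) * (\<integral>\<^sup>+x. ennreal (exp (- (\<theta> * Y x))) \<partial>M) ^ n"
    using nn_integral_exp_neg_partial_sum[OF assms(1), of "\<lambda>x. \<theta> * Y x" n]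
    by (subst nn_integral_cmult) simp_all
  also have "ennreal (exp (\<theta> * c * n)) = ennreal (exp (\<theta> * c)) ^ n"
    by (simp add: exp_of_nat2_mult[symmetric] ennreal_power mult.commute mult.left_commute)
  finally show ?thesis by (simp add: power_mult_distrib)
qed

lemma integral_exp_neg_le_quadratic:
  fixes Y :: "'a \<Rightarrow> real"
  assumes "prob_space M" and [measurable]: "Y \<in> borel_measurable M"
    and bounded: "\<And>x. 0 \<le> Y x \<and> Y x \<le> K" and "0 \<le> \<theta>"
  shows "(\<integral>x. exp (- (\<theta> * Y x)) \<partial>M) \<le> 1 - \<theta> * (\<integral>x. Y x \<partial>M) + \<theta>\<^sup>2 * K\<^sup>2 / 2"
proof -
  interpret prob_space M by fact
  have "0 \<le> K" using bounded order_trans by blast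
  have "exp (- (\<theta> * Y x)) \<le> 1 - \<theta> * Y x + \<theta>\<^sup>2 * K\<^sup>2 / 2" for x
  proof -
    have "(\<theta> * Y x)\<^sup>2 \<le> \<theta>\<^sup>2 * K\<^sup>2"
      using bounded[of x] \<open>0 \<le> \<theta>\<close> by (simp add: power_mult_distrib power_mono mult_left_mono)
    then show ?thesis
      using exp_neg_le_quadratic[of "\<theta> * Y x"] bounded[of x] \<open>0 \<le> \<theta>\<close> by simp
  qed
  moreover have "integrable M Y"
    using bounded \<open>0 \<le> K\<close> by (intro integrable_const_bound[where B = K]) auto
  moreover have "integrable M (\<lambda>x. exp (- (\<theta> * Y x)))"
    using bounded \<open>0 \<le> \<theta>\<close> by (intro integrable_const_bound[where B = 1]) auto
  ultimately have "(\<integral>x. exp (- (\<theta> * Y x)) \<partial>M) \<le> (\<integral>x. 1 - \<theta> * Y x + \<theta>\<^sup>2 * K\<^sup>2 / 2 \<partial>M)"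
    by (intro integral_mono) auto
  also have "\<dots> = 1 - \<theta> * (\<integral>x. Y x \<partial>M) + \<theta>\<^sup>2 * K\<^sup>2 / 2"
    using \<open>integrable M Y\<close> prob_space by (simp add: integral_diff integral_add)
  finally show ?thesis .
qed

text \<open>The tilt \<open>\<theta> = (m - c) / (K\<^sup>2 + 1)\<close>, where \<open>m\<close> is the mean of \<open>Y\<close>, makes the quadratic term
  \<open>\<theta>\<^sup>2 K\<^sup>2 / 2\<close> smaller than the gain \<open>\<theta> (m - c)\<close>, whence
  \<open>E exp (-\<theta> Y) < 1 - \<theta> c \<le> exp (-\<theta> c)\<close>.\<close>

lemma exponential_tilt_lt_one:
  fixes Y :: "'a \<Rightarrow> real"
  assumes "prob_space M" and [measurable]: "Y \<in> borel_measurable M"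
    and bounded: "\<And>x. 0 \<le> Y x \<and> Y x \<le> K" and mean: "c < (\<integral>x. Y x \<partial>M)"
  obtains \<theta> where "0 \<le> \<theta>"
    and "ennreal (exp (\<theta> * c)) * (\<integral>\<^sup>+x. ennreal (exp (- (\<theta> * Y x))) \<partial>M) < 1"
proof -
  interpret prob_space M by fact
  define m where "m = (\<integral>x. Y x \<partial>M)"
  define \<theta> where "\<theta> = (m - c) / (K\<^sup>2 + 1)"
  have "0 < K\<^sup>2 + 1" by (simp add: add_nonneg_pos)
  then have "0 < \<theta>"
    using mean unfolding \<theta>_def m_def by simp
  have "\<theta> * K\<^sup>2 \<le> \<theta> * (K\<^sup>2 + 1)"
    using \<open>0 < \<theta>\<close> by simp
  also have "\<dots> = m - c"
    using \<open>0 < K\<^sup>2 + 1\<close> unfolding \<theta>_def by simp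
  finally have "\<theta> * (\<theta> * K\<^sup>2 / 2) < \<theta> * (m - c)"
    using mean \<open>0 < \<theta>\<close> unfolding m_def by (intro mult_strict_left_mono) auto
  then have "(\<integral>x. exp (- (\<theta> * Y x)) \<partial>M) < 1 - \<theta> * c"
    using integral_exp_neg_le_quadratic[OF assms(1,2) bounded, of \<theta>] \<open>0 < \<theta>\<close>
    unfolding m_def by (simp add: power2_eq_square algebra_simps)
  also have "\<dots> \<le> exp (- (\<theta> * c))"
    using exp_ge_add_one_self[of "- (\<theta> * c)"] by simp
  finally have "exp (\<theta> * c) * (\<integral>x. exp (- (\<theta> * Y x)) \<partial>M) < 1"
    by (simp add: exp_minus field_simps)
  moreover have "(\<integral>\<^sup>+x. ennreal (exp (- (\<theta> * Y x))) \<partial>M) = ennreal (\<integral>x. exp (- (\<theta> * Y x)) \<partial>M)"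
    using bounded \<open>0 < \<theta>\<close>
    by (intro nn_integral_eq_integral integrable_const_bound[where B = 1]) auto
  ultimately have "ennreal (exp (\<theta> * c)) * (\<integral>\<^sup>+x. ennreal (exp (- (\<theta> * Y x))) \<partial>M) < 1"
    by (simp add: ennreal_mult[symmetric] integral_nonneg_AE ennreal_1[symmetric] ennreal_lessI
             del: ennreal_1)
  with \<open>0 < \<theta>\<close> show ?thesis
    by (intro that) simp_all
qed

lemma nn_integral_truncation_exceeds:
  fixes Y :: "'a \<Rightarrow> real"
  assumes [measurable]: "Y \<in> borel_measurable M" and "\<And>x. 0 \<le> Y x"
    and "a < (\<integral>\<^sup>+x. ennreal (Y x) \<partial>M)"
  obtains K :: nat where "a < (\<integral>\<^sup>+x. ennreal (min (Y x) K) \<partial>M)"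
proof -
  have "(SUP K. ennreal (min y (real K))) = ennreal y" for y
  proof (rule antisym)
    show "(SUP K. ennreal (min y (real K))) \<le> ennreal y"
      by (intro SUP_least ennreal_leI) simp
    show "ennreal y \<le> (SUP K. ennreal (min y (real K)))"
      by (rule SUP_upper2[of "nat \<lceil>y\<rceil>"]) (auto intro: ennreal_leI simp: min_def)
  qed
  then have "(\<integral>\<^sup>+x. ennreal (Y x) \<partial>M) = (\<integral>\<^sup>+x. (SUP K. ennreal (min (Y x) (real K))) \<partial>M)"
    by simp
  also have "\<dots> = (SUP K. \<integral>\<^sup>+x. ennreal (min (Y x) (real K)) \<partial>M)"
    by (rule nn_integral_monotone_convergence_SUP) (auto simp: incseq_def le_fun_def intro: ennreal_leI)
  finally show ?thesis
    using assms(3) that by (auto simp: less_SUP_iff)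
qed

lemma AE_eventually_notin_geometric:
  assumes "prob_space M" and [measurable]: "\<And>n. A n \<in> sets M"
    and "\<And>n. emeasure M (A n) \<le> \<rho> ^ n" and "\<rho> < 1"
  shows "AE x in M. eventually (\<lambda>n. x \<notin> A n) sequentially"
proof -
  interpret prob_space M by fact
  obtain r where r: "\<rho> = ennreal r" "0 \<le> r" "r < 1"
    using \<open>\<rho> < 1\<close> by (cases \<rho>) (auto simp: ennreal_1[symmetric] ennreal_less_iff simp del: ennreal_1)
  have bound: "norm (measure M (A n)) \<le> r ^ n" for n
    using assms(3)[of n] r by (simp add: emeasure_eq_measure ennreal_power)
  have "summable (\<lambda>n. r ^ n)"
    using r by (intro summable_geometric) simp
  then have "summable (\<lambda>n. measure M (A n))"
    by (rule summable_comparison_test') (rule bound)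
  moreover have "emeasure M (A n) < \<infinity>" for n
    using emeasure_finite by (simp add: less_top[symmetric])
  ultimately have "AE x in M. eventually (\<lambda>n. x \<in> space M - A n) sequentially"
    by (intro borel_cantelli_AE1 assms(2))
  then show ?thesis
    by eventually_elim (auto elim: eventually_mono)
qed

lemma AE_eventually_partial_sum_gt_bounded:
  fixes Y :: "'a \<Rightarrow> real" and c :: real
  assumes "prob_space M" and [measurable]: "Y \<in> borel_measurable M"
    and bounded: "\<And>x. 0 \<le> Y x \<and> Y x \<le> K" and mean: "c < (\<integral>x. Y x \<partial>M)"
  shows "AE \<omega> in stream_space M. eventually (\<lambda>n. c * n < (\<Sum>k<n. Y (\<omega> !! k))) sequentially"
proof -
  obtain \<theta> where "0 \<le> \<theta>"
    and \<rho>: "ennreal (exp (\<theta> * c)) * (\<integral>\<^sup>+x. ennreal (exp (- (\<theta> * Y x))) \<partial>M) < 1"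
    using exponential_tilt_lt_one[OF assms] by blast
  define A where "A n = {\<omega>\<in>space (stream_space M). (\<Sum>k<n. Y (\<omega> !! k)) \<le> c * n}" for n
  have A_sets [measurable]: "A n \<in> sets (stream_space M)" for n
    unfolding A_def by measurable
  have A_le: "emeasure (stream_space M) (A n)
      \<le> (ennreal (exp (\<theta> * c)) * (\<integral>\<^sup>+x. ennreal (exp (- (\<theta> * Y x))) \<partial>M)) ^ n" for n
    unfolding A_def by (rule emeasure_partial_sum_le_chernoff[OF assms(1) _ \<open>0 \<le> \<theta>\<close>]) measurable
  have "AE \<omega> in stream_space M. eventually (\<lambda>n. \<omega> \<notin> A n) sequentially"
    using assms(1)
    by (rule AE_eventually_notin_geometric[OF prob_space.prob_space_stream_space A_sets A_le \<rho>])
  then show ?thesis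
  proof (rule AE_mp, intro AE_I2 impI)
    fix \<omega> assume "\<omega> \<in> space (stream_space M)" and "eventually (\<lambda>n. \<omega> \<notin> A n) sequentially"
    then show "eventually (\<lambda>n. c * n < (\<Sum>k<n. Y (\<omega> !! k))) sequentially"
      unfolding A_def by (auto elim: eventually_mono)
  qed
qed

text \<open>Truncating \<open>Y\<close> reduces to the bounded case, so \<open>Y\<close> need not be integrable.\<close>

lemma AE_eventually_partial_sum_gt:
  fixes Y :: "'a \<Rightarrow> real" and c :: real
  assumes "prob_space M" and [measurable]: "Y \<in> borel_measurable M" and nonneg: "\<And>x. 0 \<le> Y x"
    and mean: "ennreal c < (\<integral>\<^sup>+x. ennreal (Y x) \<partial>M)"
  shows "AE \<omega> in stream_space M. eventually (\<lambda>n. c * n < (\<Sum>k<n. Y (\<omega> !! k))) sequentially"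
proof -
  interpret prob_space M by fact
  obtain K :: nat where K: "ennreal c < (\<integral>\<^sup>+x. ennreal (min (Y x) K) \<partial>M)"
    using nn_integral_truncation_exceeds[OF assms(2) nonneg mean] .
  define Z where "Z x = min (Y x) K" for x
  have Z_measurable [measurable]: "Z \<in> borel_measurable M" unfolding Z_def by measurable
  have Z_bounded: "0 \<le> Z x \<and> Z x \<le> K" for x
    using nonneg unfolding Z_def by simp
  have "(\<integral>\<^sup>+x. ennreal (Z x) \<partial>M) = ennreal (\<integral>x. Z x \<partial>M)"
    using Z_bounded by (intro nn_integral_eq_integral integrable_const_bound[where B = K]) auto
  moreover have "0 \<le> (\<integral>x. Z x \<partial>M)"
    using Z_bounded by simp
  ultimately have "c < (\<integral>x. Z x \<partial>M)"
    using K unfolding Z_def[symmetric] by (cases "0 \<le> c") (auto simp: ennreal_less_iff)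
  then have "AE \<omega> in stream_space M. eventually (\<lambda>n. c * n < (\<Sum>k<n. Z (\<omega> !! k))) sequentially"
    using AE_eventually_partial_sum_gt_bounded[OF assms(1) Z_measurable Z_bounded] by blast
  moreover have "(\<Sum>k<n. Z (\<omega> !! k)) \<le> (\<Sum>k<n. Y (\<omega> !! k))" for n \<omega>
    unfolding Z_def by (intro sum_mono) simp
  ultimately show ?thesis
    by (elim AE_mp, intro AE_I2 impI) (erule eventually_mono, erule order.strict_trans2)
qed


section \<open>The arrival process\<close>

definition poisson_weight :: "real \<Rightarrow> nat \<Rightarrow> real" where
  "poisson_weight \<mu> n = exp (- \<mu>) * \<mu> ^ n / fact n"

lemma poisson_weight_nonneg: "0 \<le> \<mu> \<Longrightarrow> 0 \<le> poisson_weight \<mu> n"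
  by (simp add: poisson_weight_def)

lemma poisson_weight_sums: "(\<lambda>n. poisson_weight \<mu> n) sums 1"
proof -
  have "(\<lambda>n. exp (- \<mu>) * (\<mu> ^ n /\<^sub>R fact n)) sums (exp (- \<mu>) * exp \<mu>)"
    by (intro sums_mult exp_converges)
  then show ?thesis by (simp add: poisson_weight_def exp_minus field_simps)
qed

lemma poisson_weight_mean: "(\<lambda>n. real n * poisson_weight \<mu> n) sums \<mu>"
proof -
  have shift: "\<mu> * poisson_weight \<mu> n = real (Suc n) * poisson_weight \<mu> (Suc n)" for n
    by (simp add: poisson_weight_def fact_Suc del: of_nat_Suc)
  have "(\<lambda>n. \<mu> * poisson_weight \<mu> n) sums (\<mu> * 1)"
    by (rule sums_mult[OF poisson_weight_sums])
  then have "(\<lambda>n. real (Suc n) * poisson_weight \<mu> (Suc n)) sums \<mu>"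
    by (simp only: shift mult_1_right)
  then show ?thesis
    using sums_Suc_iff[of "\<lambda>n. real n * poisson_weight \<mu> n"] by simp
qed

lemma nn_integral_arrivals_dist:
  assumes "sets G = sets borel"
  shows "(\<integral>\<^sup>+n. f n \<partial>arrivals_dist lam G) = (\<integral>\<^sup>+s. (\<Sum>n. ennreal (poisson_weight (lam * s) n) * f n) \<partial>G)"
proof -
  have [measurable]: "(\<lambda>s. ennreal (poisson_weight (lam * s) n)) \<in> borel_measurable G" for n
    by (simp add: poisson_weight_def measurable_cong_sets[OF assms refl])
  have "(\<integral>\<^sup>+n. f n \<partial>arrivals_dist lam G) = (\<Sum>n. (\<integral>\<^sup>+s. ennreal (poisson_weight (lam * s) n) \<partial>G) * f n)"
    unfolding arrivals_dist_def
    by (subst nn_integral_density) (auto simp: nn_integral_count_space_nat poisson_weight_def mult.commute)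
  also have "\<dots> = (\<Sum>n. \<integral>\<^sup>+s. ennreal (poisson_weight (lam * s) n) * f n \<partial>G)"
    by (simp add: nn_integral_multc)
  also have "\<dots> = (\<integral>\<^sup>+s. (\<Sum>n. ennreal (poisson_weight (lam * s) n) * f n) \<partial>G)"
    by (intro nn_integral_suminf[symmetric]) auto
  finally show ?thesis .
qed

lemma prob_space_arrivals_dist:
  assumes "prob_space G" "sets G = sets borel" and "AE s in G. 0 \<le> s" and "0 \<le> lam"
  shows "prob_space (arrivals_dist lam G)"
proof
  have "emeasure (arrivals_dist lam G) (space (arrivals_dist lam G)) = (\<integral>\<^sup>+n. 1 \<partial>arrivals_dist lam G)"
    by simp
  also have "\<dots> = (\<integral>\<^sup>+s. (\<Sum>n. ennreal (poisson_weight (lam * s) n) * 1) \<partial>G)"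
    by (rule nn_integral_arrivals_dist[OF assms(2)])
  also have "\<dots> = (\<integral>\<^sup>+s. 1 \<partial>G)"
    using assms(3)
  proof (intro nn_integral_cong_AE, eventually_elim)
    case (elim s)
    then show ?case
      using \<open>0 \<le> lam\<close>
      by (simp, intro suminf_ennreal_eq[where x = 1, simplified] poisson_weight_sums poisson_weight_nonneg)
        simp
  qed
  also have "\<dots> = 1"
    using prob_space.emeasure_space_1[OF assms(1)] by simp
  finally show "emeasure (arrivals_dist lam G) (space (arrivals_dist lam G)) = 1" .
qed

lemma nn_integral_arrivals_dist_mean:
  assumes "sets G = sets borel" and "AE s in G. 0 \<le> s" and "integrable G (\<lambda>s. s)" and "0 \<le> lam"
  shows "(\<integral>\<^sup>+n. of_nat n \<partial>arrivals_dist lam G) = ennreal (lam * (\<integral>s. s \<partial>G))"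
proof -
  have "(\<integral>\<^sup>+n. of_nat n \<partial>arrivals_dist lam G) = (\<integral>\<^sup>+s. ennreal (lam * s) \<partial>G)"
    unfolding nn_integral_arrivals_dist[OF assms(1)]
    using assms(2)
  proof (intro nn_integral_cong_AE, eventually_elim)
    case (elim s)
    have "(\<Sum>n. ennreal (poisson_weight (lam * s) n) * of_nat n) = (\<Sum>n. ennreal (real n * poisson_weight (lam * s) n))"
      by (simp add: ennreal_mult' ennreal_of_nat_eq_real_of_nat mult.commute)
    also have "\<dots> = ennreal (lam * s)"
      using elim \<open>0 \<le> lam\<close>
      by (intro suminf_ennreal_eq poisson_weight_mean) (simp add: poisson_weight_nonneg)
    finally show ?case .
  qed
  also have "\<dots> = ennreal (\<integral>s. lam * s \<partial>G)"
    using assms by (intro nn_integral_eq_integral) auto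
  finally show ?thesis by simp
qed

lemma emeasure_arrivals_dist_0_pos:
  assumes "prob_space G" "sets G = sets borel"
  shows "0 < emeasure (arrivals_dist lam G) {0}"
proof -
  have "emeasure (arrivals_dist lam G) {0} = (\<integral>\<^sup>+s. ennreal (exp (- (lam * s))) \<partial>G)"
    unfolding arrivals_dist_def by (simp add: emeasure_density nn_integral_indicator_singleton)
  also have "\<dots> > 0"
  proof -
    have exp_measurable: "(\<lambda>s. exp (- (lam * s))) \<in> borel_measurable G"
      by (simp add: measurable_cong_sets[OF assms(2) refl])
    have "\<not> (AE s in G. ennreal (exp (- (lam * s))) = 0)"
      using prob_space.AE_False[OF assms(1)] by simp
    then show ?thesis
      by (subst zero_less_iff_neq_zero, subst nn_integral_0_iff_AE) (simp_all add: exp_measurable)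
  qed
  finally show ?thesis .
qed

lemma prob_space_unif_circ: "0 < l \<Longrightarrow> prob_space (unif_circ l)"
  unfolding unif_circ_def by (rule prob_space_uniform_measure) auto

lemma prob_space_input_dist:
  assumes "0 < l" and "prob_space (arrivals_dist lam G)"
  shows "prob_space (input_dist l lam G)"
  unfolding input_dist_def using assms prob_space_unif_circ
  by (intro prob_space_pair prob_space_PiM) auto

lemma measurable_input_count [measurable]: "fst \<in> input_dist l lam G \<rightarrow>\<^sub>M count_space UNIV"
  using measurable_fst[of "arrivals_dist lam G"] unfolding input_dist_def
  by (simp add: arrivals_dist_def)

lemma nn_integral_input_dist_fst:
  assumes "0 < l" and "prob_space (arrivals_dist lam G)"
  shows "(\<integral>\<^sup>+x. f (fst x) \<partial>input_dist l lam G) = (\<integral>\<^sup>+n. f n \<partial>arrivals_dist lam G)"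
proof -
  interpret prob_space "(\<Pi>\<^sub>M i\<in>UNIV. unif_circ l) \<Otimes>\<^sub>M unif_circ l"
    using assms prob_space_unif_circ by (intro prob_space_pair prob_space_PiM) auto
  have "(\<integral>\<^sup>+n. f n \<partial>arrivals_dist lam G)
      = (\<integral>\<^sup>+n. f n \<partial>distr (input_dist l lam G) (arrivals_dist lam G) fst)"
    unfolding input_dist_def by (simp add: distr_pair_fst)
  also have "\<dots> = (\<integral>\<^sup>+x. f (fst x) \<partial>input_dist l lam G)"
    unfolding input_dist_def by (subst nn_integral_distr) (auto simp: arrivals_dist_def)
  finally show ?thesis by simp
qed


section \<open>The polling process\<close>

lemma size_serve_ge: "size \<zeta> \<le> size (serve l r \<zeta> u) + 1"
  unfolding serve_def
  by (cases "nearest_atom l \<zeta> u \<in># \<zeta>") (auto simp: size_Diff_singleton diff_single_trivial)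

lemma size_polling_step_ge: "size \<zeta> + fst inp \<le> size (polling_step l r \<zeta> inp) + 1"
  using size_serve_ge[of "\<zeta> + mset (map (fst (snd inp)) [0..<fst inp])" l r "snd (snd inp)"]
  unfolding polling_step_def by (cases inp) auto

lemma size_polling_W_ge: "size \<zeta> + (\<Sum>k<t. fst (\<omega> !! k)) \<le> size (polling_W l r \<zeta> \<omega> t) + t"
proof (induction t)
  case (Suc t)
  then show ?case
    using size_polling_step_ge[of "polling_W l r \<zeta> \<omega> t" "\<omega> !! t" l r] by simp
qed simp

lemma busy_period_le_return_time_empty: "busy_period fst \<omega> \<le> return_time_empty l r \<omega>"
proof (cases "\<exists>t\<ge>1. polling_W l r {#} \<omega> t = {#}")
  case True
  define T where "T = (LEAST t. 1 \<le> t \<and> polling_W l r {#} \<omega> t = {#})"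
  have T: "1 \<le> T" "polling_W l r {#} \<omega> T = {#}"
    using LeastI_ex[OF True[unfolded Bex_def]] unfolding T_def by auto
  then have "(\<Sum>k<T. fst (\<omega> !! k)) \<le> T"
    using size_polling_W_ge[of "{#}" \<omega> T l r] by simp
  then have exit: "\<not> positive_upto fst 0 i \<omega>" if "T \<le> i" for i
    using that T unfolding positive_upto_def by (auto intro!: bexI[of _ T])
  have "busy_period fst \<omega> = (\<Sum>i<T. if positive_upto fst 0 i \<omega> then 1 else 0)"
    unfolding busy_period_def using exit by (intro suminf_finite) auto
  also have "\<dots> \<le> of_nat T"
    using sum_mono[of "{..<T}" "\<lambda>i. if positive_upto fst 0 i \<omega> then 1 else (0::ennreal)" "\<lambda>_. 1"]
    by simp
  also have "\<dots> = return_time_empty l r \<omega>"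
    unfolding return_time_empty_def T_def using True by simp
  finally show ?thesis .
next
  case False
  then have "return_time_empty l r \<omega> = \<infinity>"
    unfolding return_time_empty_def by (rule if_not_P)
  then show ?thesis by simp
qed

lemma polling_input_facts:
  assumes "0 < l" and "0 \<le> lam" and "prob_space G" "sets G = sets borel" and "AE s in G. 0 \<le> s"
    and "integrable G (\<lambda>s. s)"
  shows "prob_space (input_dist l lam G)"
    and "(\<integral>\<^sup>+x. of_nat (fst x) \<partial>input_dist l lam G) = ennreal (lam * (\<integral>s. s \<partial>G))"
    and "0 < emeasure (input_dist l lam G) {x\<in>space (input_dist l lam G). fst x = 0}"
proof -
  have arrivals: "prob_space (arrivals_dist lam G)"
    using assms by (intro prob_space_arrivals_dist)
  show "prob_space (input_dist l lam G)"
    using assms(1) arrivals by (rule prob_space_input_dist)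
  show "(\<integral>\<^sup>+x. of_nat (fst x) \<partial>input_dist l lam G) = ennreal (lam * (\<integral>s. s \<partial>G))"
    using assms by (simp add: nn_integral_input_dist_fst[OF assms(1) arrivals] nn_integral_arrivals_dist_mean)
  have "emeasure (input_dist l lam G) {x\<in>space (input_dist l lam G). fst x = 0}
      = (\<integral>\<^sup>+x. indicator {0} (fst x) \<partial>input_dist l lam G)"
    by (subst nn_integral_indicator[symmetric]) (measurable, intro nn_integral_cong, simp add: indicator_def)
  also have "\<dots> = emeasure (arrivals_dist lam G) {0}"
    by (simp add: nn_integral_input_dist_fst[OF assms(1) arrivals] arrivals_dist_def)
  finally show "0 < emeasure (input_dist l lam G) {x\<in>space (input_dist l lam G). fst x = 0}"
    using emeasure_arrivals_dist_0_pos[OF assms(3,4)] by simp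
qed

lemma polling_not_positive_recurrent:
  assumes "0 < l" and "0 \<le> lam" and "prob_space G" "sets G = sets borel" and "AE s in G. 0 \<le> s"
    and "integrable G (\<lambda>s. s)" and "1 \<le> lam * (\<integral>s. s \<partial>G)"
  shows "\<not> polling_positive_recurrent l r lam G"
proof
  note input = polling_input_facts[OF assms(1-6)]
  have "(\<integral>\<^sup>+\<omega>. busy_period fst \<omega> \<partial>polling_space l lam G) = \<infinity>"
    unfolding polling_space_def
    using input assms(7) by (intro nn_integral_busy_period_eq_top) simp_all
  moreover have "(\<integral>\<^sup>+\<omega>. busy_period fst \<omega> \<partial>polling_space l lam G)
      \<le> (\<integral>\<^sup>+\<omega>. return_time_empty l r \<omega> \<partial>polling_space l lam G)"
    by (intro nn_integral_mono busy_period_le_return_time_empty)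
  ultimately show "polling_positive_recurrent l r lam G \<Longrightarrow> False"
    unfolding polling_positive_recurrent_def by (simp add: top_unique)
qed

lemma filterlim_size_polling_W_at_top:
  fixes c :: real
  assumes "1 < c" and arrivals: "eventually (\<lambda>n. c * n < (\<Sum>k<n. real (fst (\<omega> !! k)))) sequentially"
  shows "filterlim (\<lambda>t. size (polling_W l r \<zeta> \<omega> t)) at_top sequentially"
proof -
  from arrivals have "eventually (\<lambda>n. (c - 1) * n \<le> real (size (polling_W l r \<zeta> \<omega> n))) sequentially"
  proof (rule eventually_mono)
    fix n assume "c * n < (\<Sum>k<n. real (fst (\<omega> !! k)))"
    moreover have "(\<Sum>k<n. real (fst (\<omega> !! k))) \<le> real (size (polling_W l r \<zeta> \<omega> n)) + n"
      using size_polling_W_ge[of \<zeta> \<omega> n l r] unfolding of_nat_sum[symmetric] by linarith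
    ultimately show "(c - 1) * n \<le> real (size (polling_W l r \<zeta> \<omega> n))"
      by (simp add: algebra_simps)
  qed
  moreover have "filterlim (\<lambda>n. (c - 1) * real n) at_top sequentially"
    using \<open>1 < c\<close>
    by (intro filterlim_tendsto_pos_mult_at_top[OF tendsto_const] filterlim_real_sequentially) simp
  ultimately show ?thesis
    unfolding filterlim_sequentially_iff_filterlim_real by (rule filterlim_at_top_mono[rotated])
qed

lemma polling_size_tendsto_at_top:
  assumes "0 < l" and "0 \<le> lam" and "prob_space G" "sets G = sets borel" and "AE s in G. 0 \<le> s"
    and "integrable G (\<lambda>s. s)" and "1 < lam * (\<integral>s. s \<partial>G)"
  shows "AE \<omega> in polling_space l lam G. filterlim (\<lambda>t. size (polling_W l r \<zeta> \<omega> t)) at_top sequentially"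
proof -
  note input = polling_input_facts[OF assms(1-6)]
  define c where "c = (1 + lam * (\<integral>s. s \<partial>G)) / 2"
  have "1 < c" "c < lam * (\<integral>s. s \<partial>G)"
    using assms(7) unfolding c_def by auto
  then have "ennreal c < (\<integral>\<^sup>+x. ennreal (real (fst x)) \<partial>input_dist l lam G)"
    using input(2) by (simp add: ennreal_of_nat_eq_real_of_nat[symmetric] ennreal_lessI)
  then have "AE \<omega> in polling_space l lam G.
      eventually (\<lambda>n. c * n < (\<Sum>k<n. real (fst (\<omega> !! k)))) sequentially"
    unfolding polling_space_def using input(1) by (intro AE_eventually_partial_sum_gt) auto
  then show ?thesis
    by (rule AE_mp, intro AE_I2 impI) (rule filterlim_size_polling_W_at_top[OF \<open>1 < c\<close>])
qed

theorem theorem2: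
  fixes l r lam :: real and G :: "real measure"
  assumes "l > 0" and "r > 0" and "lam > 0"
    and "prob_space G" and "sets G = sets borel"
    and "AE s in G. s \<ge> 0"
    and "integrable G (\<lambda>s. s)"
  shows "(lam * (\<integral> s. s \<partial>G) \<ge> 1 \<longrightarrow> \<not> polling_positive_recurrent l r lam G)
       \<and> (lam * (\<integral> s. s \<partial>G) > 1 \<longrightarrow>
            (\<forall>\<zeta>. set_mset \<zeta> \<subseteq> {0..<l} \<longrightarrow>
               (AE \<omega> in polling_space l lam G.
                  filterlim (\<lambda>t. size (polling_W l r \<zeta> \<omega> t)) at_top sequentially)))"
  using polling_not_positive_recurrent[of l lam G r] polling_size_tendsto_at_top[of l lam G r] assms
  by auto

end
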